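(* Let $\alpha>1/\sqrt2$ be fixed. There is a constant $C$ depending only on $\alpha$ such that the following holds. Let $N\ge 2$ and $d\ge N-1$, and let $\mathcal{D}'$ be the distribution on $\mathbb{R}^{d+1}\times\{-1,+1\}$ defined in the context. Let $S_\infty$ be the $\ell_\infty$-perturbation set of radius $\epsilon=2\eta$ and $S_{\mathrm{RT}}$ the rotation-translation perturbation set with budget $N$. Then for every classifier $f:\mathbb{R}^{d+1}\to\{-1,+1\}$, $$\mathcal{R}^{\mathrm{avg}}_{\mathrm{adv}}(f;S_\infty,S_{\mathrm{RT}})\;\ge\;\tfrac12-\frac{C}{\sqrt N}.$$
   Context: The distribution $\mathcal{D}'$ over pairs $(\mathbf{x},y)$, $\mathbf{x}=(x_0,\dots,x_d)\in\mathbb{R}^{d+1}$: $y$ uniform on $\{-1,+1\}$; given $y$, $x_0\sim\mathcal{N}(y,\alpha^{-2})$ and $x_1,\dots,x_d$ i.i.d. $\mathcal{N}(y\eta,1)$, all independent, with $\eta=\alpha/\sqrt d$. The rotation-translation (RT) perturbation set with budget $M$ is $S_{\mathrm{RT}}(\mathbf{x})=\{\mathbf{x}_\pi:\pi$ a permutation of $\{0,\dots,d\}$ with $\pi(i)=i$ for all $i\ge M\}$, where $(\mathbf{x}_\pi)_i=x_{\pi(i)}$ (i.e. the coordinates with index $<M$ may be rearranged arbitrarily). The $\ell_p$-perturbation set of radius $\epsilon$ is $S(\mathbf{x})=\{\mathbf{x}+\mathbf{r}:\|\mathbf{r}\|_p\le\epsilon\}$. Adversarial risk: $\mathcal{R}_{\mathrm{adv}}(f;S)=\Pr_{(\mathbf{x},y)\sim\mathcal{D}'}[\exists\,\mathbf{x}'\in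 S(\mathbf{x}): f(\mathbf{x}')\neq y]$, and $\mathcal{R}^{\mathrm{avg}}_{\mathrm{adv}}(f;S_1,S_2)=\frac12(\mathcal{R}_{\mathrm{adv}}(f;S_1)+\mathcal{R}_{\mathrm{adv}}(f;S_2))$. *)

theory Defs
  imports "HOL-Probability.Probability"
begin

text \<open>Points of R^(d+1) are extensional functions on the index set {0..d}.\<close>

definition eta :: "real \<Rightarrow> nat \<Rightarrow> real" where
  "eta \<alpha> d = \<alpha> / sqrt (real d)"

definition cond_law :: "real \<Rightarrow> nat \<Rightarrow> real \<Rightarrow> (nat \<Rightarrow> real) measure" where
  "cond_law \<alpha> d y =
     PiM {0..d} (\<lambda>i. if i = 0 then density lborel (normal_density y (1 / \<alpha>))
                     else density lborel (normal_density (y * eta \<alpha> d) 1))"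

definition outer_prob :: "'a measure \<Rightarrow> 'a set \<Rightarrow> real" where
  "outer_prob M E = Inf {measure M A | A. A \<in> sets M \<and> E \<subseteq> A}"

definition S_linf :: "nat \<Rightarrow> real \<Rightarrow> (nat \<Rightarrow> real) \<Rightarrow> (nat \<Rightarrow> real) set" where
  "S_linf d \<epsilon> x = {(\<lambda>i. if i \<le> d then x i + r i else undefined) | r. (\<forall>i\<in>{0..d}. \<bar>r i\<bar> \<le> \<epsilon>)}"

definition S_RT :: "nat \<Rightarrow> nat \<Rightarrow> (nat \<Rightarrow> real) \<Rightarrow> (nat \<Rightarrow> real) set" where
  "S_RT d M x = {x \<circ> \<pi> | \<pi>. \<pi> permutes {0..d} \<and> (\<forall>i. M \<le> i \<longrightarrow> \<pi> i = i)}"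

definition adv_risk ::
  "real \<Rightarrow> nat \<Rightarrow> ((nat \<Rightarrow> real) \<Rightarrow> real) \<Rightarrow> ((nat \<Rightarrow> real) \<Rightarrow> (nat \<Rightarrow> real) set) \<Rightarrow> real" where
  "adv_risk \<alpha> d f S =
     (\<Sum>y\<in>{-1, 1::real}. (1/2) *
        outer_prob (cond_law \<alpha> d y)
          {x \<in> space (cond_law \<alpha> d y). \<exists>x'\<in>S x. f x' \<noteq> y})"

definition avg_adv_risk ::
  "real \<Rightarrow> nat \<Rightarrow> ((nat \<Rightarrow> real) \<Rightarrow> real) \<Rightarrow> ((nat \<Rightarrow> real) \<Rightarrow> (nat \<Rightarrow> real) set)
     \<Rightarrow> ((nat \<Rightarrow> real) \<Rightarrow> (nat \<Rightarrow> real) set) \<Rightarrow> real" where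
  "avg_adv_risk \<alpha> d f S1 S2 = (adv_risk \<alpha> d f S1 + adv_risk \<alpha> d f S2) / 2"

end

theory Submission
  imports Defs
begin

text \<open>Fix a label \<open>y\<close> and put \<open>c = -2y\<eta>\<close>. Translating every coordinate by \<open>c\<close> is an
  \<open>\<ell>\<^sub>\<infinity>\<close>-perturbation of size \<open>2\<eta>\<close>; it moves the class-\<open>y\<close> law to a law \<open>Q\<close> which, like the
  class-\<open>(-y)\<close> law \<open>P'\<close>, has coordinates \<open>1..d\<close> i.i.d. \<open>N(-y\<eta>, 1)\<close> and so differs from
  \<open>R = N(-y\<eta>, 1)^(d+1)\<close> only in the law of \<open>x\<^sub>0\<close>. Let \<open>A\<close> be the set of points all of whose
  RT-rearrangements are RT-errors for \<open>-y\<close>. It is invariant under swapping coordinate \<open>0\<close> with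
  any \<open>k < N\<close>, so by the second moment method \<open>Q(A)\<close> and \<open>P'(A)\<close> are both within
  \<open>\<delta> = O(1/\<surd>N)\<close> of \<open>R(A)\<close>; the likelihood ratio of \<open>x\<^sub>0\<close> is square integrable precisely
  because \<open>\<alpha>\<^sup>2 > 1/2\<close>. Every \<open>x\<close> with \<open>x + c \<notin> A\<close> is an \<open>\<ell>\<^sub>\<infinity>\<close>-error for \<open>y\<close>, hence the
  \<open>\<ell>\<^sub>\<infinity>\<close>-risk at \<open>y\<close> plus the RT-risk at \<open>-y\<close> is at least \<open>1 - Q(A) + P'(A) \<ge> 1 - 2\<delta>\<close>.\<close>

section \<open>Products of a probability space\<close>

lemma integral_PiM_component:
  fixes f :: "'a \<Rightarrow> real"
  assumes M: "prob_space M" and k: "k \<in> I" and f: "integrable M f"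
  shows "integrable (PiM I (\<lambda>_. M)) (\<lambda>x. f (x k))"
    and "(\<integral>x. f (x k) \<partial>PiM I (\<lambda>_. M)) = (\<integral>t. f t \<partial>M)"
proof -
  have D: "distr (PiM I (\<lambda>_. M)) M (\<lambda>x. x k) = M"
    using distr_PiM_component[of I "\<lambda>_. M" k] M k by simp
  have fm: "f \<in> borel_measurable M" using f by simp
  have km: "(\<lambda>x. x k) \<in> measurable (PiM I (\<lambda>_. M)) M" using k by measurable
  show "integrable (PiM I (\<lambda>_. M)) (\<lambda>x. f (x k))"
    using integrable_distr_eq[OF km fm] f D by simp
  show "(\<integral>x. f (x k) \<partial>PiM I (\<lambda>_. M)) = (\<integral>t. f t \<partial>M)"
    using integral_distr[OF km fm] D by simp
qed

lemma integral_PiM_two_components: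
  fixes f g :: "'a \<Rightarrow> real"
  assumes M: "prob_space M" and I: "finite I" and kl: "k \<in> I" "l \<in> I" "k \<noteq> l"
    and f: "integrable M f" and g: "integrable M g"
  shows "integrable (PiM I (\<lambda>_. M)) (\<lambda>x. f (x k) * g (x l))"
    and "(\<integral>x. f (x k) * g (x l) \<partial>PiM I (\<lambda>_. M)) = (\<integral>t. f t \<partial>M) * (\<integral>t. g t \<partial>M)"
proof -
  interpret product_prob_space "\<lambda>_. M" by (rule product_prob_spaceI) (rule M)
  interpret M: prob_space M by (rule M)
  define F where "F = (\<lambda>i t. (if i = k then f t else 1) * (if i = l then g t else 1))"
  have F: "integrable M (F i)" for i
    using f g kl by (cases "i = k"; cases "i = l") (simp_all add: F_def)
  have prod: "(\<Prod>i\<in>I. F i (x i)) = f (x k) * g (x l)" for x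
    using kl by (simp add: F_def prod.distrib prod.delta I)
  show "integrable (PiM I (\<lambda>_. M)) (\<lambda>x. f (x k) * g (x l))"
    using product_integrable_prod[of I F] F I unfolding prod by simp
  have "(\<integral>x. f (x k) * g (x l) \<partial>PiM I (\<lambda>_. M)) = (\<Prod>i\<in>I. integral\<^sup>L M (F i))"
    using product_integral_prod[of I F] F I unfolding prod by simp
  also have "\<dots> = (\<Prod>i\<in>I. (if i = k then (\<integral>t. f t \<partial>M) else 1) * (if i = l then (\<integral>t. g t \<partial>M) else 1))"
    using kl by (intro prod.cong) (auto simp: F_def M.prob_space)
  finally show "(\<integral>x. f (x k) * g (x l) \<partial>PiM I (\<lambda>_. M)) = (\<integral>t. f t \<partial>M) * (\<integral>t. g t \<partial>M)"
    using kl by (simp add: prod.distrib prod.delta I)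
qed

lemma integral_PiM_sum_components_square:
  fixes g :: "'a \<Rightarrow> real"
  assumes M: "prob_space M" and I: "finite I" and K: "K \<subseteq> I"
    and g: "integrable M g" and g2: "integrable M (\<lambda>t. (g t)\<^sup>2)" and g0: "(\<integral>t. g t \<partial>M) = 0"
  shows "integrable (PiM I (\<lambda>_. M)) (\<lambda>x. (\<Sum>k\<in>K. g (x k))\<^sup>2)"
    and "(\<integral>x. (\<Sum>k\<in>K. g (x k))\<^sup>2 \<partial>PiM I (\<lambda>_. M)) = card K * (\<integral>t. (g t)\<^sup>2 \<partial>M)"
proof -
  have KI: "k \<in> I" if "k \<in> K" for k using that K by auto
  have sq: "(\<Sum>k\<in>K. g (x k))\<^sup>2 = (\<Sum>k\<in>K. \<Sum>l\<in>K. g (x k) * g (x l))" for x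
    by (simp add: power2_eq_square sum_product)
  have pair: "integrable (PiM I (\<lambda>_. M)) (\<lambda>x. g (x k) * g (x l))
      \<and> (\<integral>x. g (x k) * g (x l) \<partial>PiM I (\<lambda>_. M)) = (if k = l then \<integral>t. (g t)\<^sup>2 \<partial>M else 0)"
    if "k \<in> K" "l \<in> K" for k l
  proof (cases "k = l")
    case True
    then show ?thesis
      using integral_PiM_component[OF M KI[OF that(1)] g2] by (simp add: power2_eq_square)
  next
    case False
    then show ?thesis
      using integral_PiM_two_components[OF M I KI[OF that(1)] KI[OF that(2)] False g g] g0 by simp
  qed
  show "integrable (PiM I (\<lambda>_. M)) (\<lambda>x. (\<Sum>k\<in>K. g (x k))\<^sup>2)"
    unfolding sq using pair by (intro Bochner_Integration.integrable_sum) auto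
  have "(\<integral>x. (\<Sum>k\<in>K. g (x k))\<^sup>2 \<partial>PiM I (\<lambda>_. M))
      = (\<Sum>k\<in>K. \<Sum>l\<in>K. \<integral>x. g (x k) * g (x l) \<partial>PiM I (\<lambda>_. M))"
  proof -
    have "(\<integral>x. (\<Sum>l\<in>K. g (x k) * g (x l)) \<partial>PiM I (\<lambda>_. M))
        = (\<Sum>l\<in>K. \<integral>x. g (x k) * g (x l) \<partial>PiM I (\<lambda>_. M))" if "k \<in> K" for k
      using pair that by (intro Bochner_Integration.integral_sum) auto
    moreover have "integrable (PiM I (\<lambda>_. M)) (\<lambda>x. \<Sum>l\<in>K. g (x k) * g (x l))" if "k \<in> K" for k
      using pair that by (intro Bochner_Integration.integrable_sum) auto
    ultimately show ?thesis
      unfolding sq by (subst Bochner_Integration.integral_sum) auto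
  qed
  also have "\<dots> = (\<Sum>k\<in>K. \<Sum>l\<in>K. if k = l then \<integral>t. (g t)\<^sup>2 \<partial>M else 0)"
    using pair by (intro sum.cong refl) blast
  also have "\<dots> = card K * (\<integral>t. (g t)\<^sup>2 \<partial>M)"
    using finite_subset[OF K I] by simp
  finally show "(\<integral>x. (\<Sum>k\<in>K. g (x k))\<^sup>2 \<partial>PiM I (\<lambda>_. M)) = card K * (\<integral>t. (g t)\<^sup>2 \<partial>M)" .
qed

lemma measurable_PiM_permute:
  assumes p: "\<pi> permutes I"
  shows "(\<lambda>x. x \<circ> \<pi>) \<in> measurable (PiM I (\<lambda>_. M)) (PiM I (\<lambda>_. M))"
proof (rule measurable_PiM_single')
  fix i assume "i \<in> I"
  then show "(\<lambda>x. (x \<circ> \<pi>) i) \<in> measurable (PiM I (\<lambda>_. M)) M"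
    using permutes_in_image[OF p] by simp measurable
next
  show "(\<lambda>x. x \<circ> \<pi>) \<in> space (PiM I (\<lambda>_. M)) \<rightarrow> PiE I (\<lambda>_. space M)"
    using p by (auto simp: space_PiM PiE_iff extensional_def permutes_not_in permutes_in_image)
qed

lemma integral_PiM_permute:
  fixes h :: "('i \<Rightarrow> 'a) \<Rightarrow> real"
  assumes M: "prob_space M" and p: "\<pi> permutes I" and h: "h \<in> borel_measurable (PiM I (\<lambda>_. M))"
  shows "(\<integral>x. h (x \<circ> \<pi>) \<partial>PiM I (\<lambda>_. M)) = (\<integral>x. h x \<partial>PiM I (\<lambda>_. M))"
proof -
  let ?t = "\<lambda>x. \<lambda>i\<in>I. x (\<pi> i)"
  have D: "distr (PiM I (\<lambda>_. M)) (PiM I (\<lambda>_. M)) ?t = PiM I (\<lambda>_. M)"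
    using distr_PiM_reindex[of I "\<lambda>_. M" \<pi> I] M p
    by (simp add: permutes_inj_on permutes_in_image)
  have t: "?t x = x \<circ> \<pi>" if "x \<in> space (PiM I (\<lambda>_. M))" for x
    using that p by (auto simp: space_PiM PiE_iff extensional_def permutes_not_in fun_eq_iff)
  have tm: "?t \<in> measurable (PiM I (\<lambda>_. M)) (PiM I (\<lambda>_. M))"
    using measurable_PiM_permute[OF p] by (rule measurable_cong[THEN iffD1, rotated]) (simp add: t)
  have "(\<integral>x. h x \<partial>PiM I (\<lambda>_. M)) = (\<integral>x. h (?t x) \<partial>PiM I (\<lambda>_. M))"
    using integral_distr[OF tm h] D by simp
  also have "\<dots> = (\<integral>x. h (x \<circ> \<pi>) \<partial>PiM I (\<lambda>_. M))"
    by (intro Bochner_Integration.integral_cong) (simp_all add: t)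
  finally show ?thesis ..
qed

lemma PiM_planted_eq_density:
  fixes L :: "'a \<Rightarrow> real"
  assumes M: "prob_space M" and D: "prob_space (density M L)"
    and L: "L \<in> borel_measurable M" "\<And>t. L t \<ge> 0" and I: "finite I" and j: "j \<in> I"
  shows "PiM I (\<lambda>i. if i = j then density M L else M) = density (PiM I (\<lambda>_. M)) (\<lambda>x. L (x j))"
proof -
  interpret P: product_prob_space "\<lambda>i. if i = j then density M L else M"
    using M D by (intro product_prob_spaceI) simp
  interpret R: product_prob_space "\<lambda>_. M" by (intro product_prob_spaceI) (rule M)
  have L0: "(\<lambda>x. L (x j)) \<in> borel_measurable (PiM I (\<lambda>_. M))" using L(1) j by measurable
  show ?thesis
  proof (rule P.PiM_eqI[symmetric, OF I])
    show "sets (density (PiM I (\<lambda>_. M)) (\<lambda>x. L (x j))) = sets (PiM I (\<lambda>i. if i = j then density M L else M))"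
      by (auto intro!: sets_PiM_cong split: if_splits)
  next
    fix A assume A: "\<And>i. i \<in> I \<Longrightarrow> A i \<in> sets (if i = j then density M L else M)"
    have AM: "A i \<in> sets M" if "i \<in> I" for i using A[OF that] by (simp split: if_splits)
    define h where "h = (\<lambda>i t. (if i = j then ennreal (L t) else 1) * indicator (A i) t)"
    have hm: "h i \<in> borel_measurable M" if "i \<in> I" for i
      using AM[OF that] L(1) unfolding h_def by (cases "i = j") simp_all
    have "emeasure (density (PiM I (\<lambda>_. M)) (\<lambda>x. L (x j))) (PiE I A)
        = (\<integral>\<^sup>+ x. ennreal (L (x j)) * indicator (PiE I A) x \<partial>PiM I (\<lambda>_. M))"
      using AM L0 by (subst emeasure_density) (auto intro!: sets_PiM_I_finite I)
    also have "\<dots> = (\<integral>\<^sup>+ x. (\<Prod>i\<in>I. h i (x i)) \<partial>PiM I (\<lambda>_. M))"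
    proof (rule nn_integral_cong)
      fix x assume x: "x \<in> space (PiM I (\<lambda>_. M))"
      have "(\<Prod>i\<in>I. h i (x i)) = ennreal (L (x j)) * (\<Prod>i\<in>I. indicator (A i) (x i))"
        unfolding h_def prod.distrib using I j by (subst prod.remove[of _ j]) (auto intro!: prod.neutral)
      also have "(\<Prod>i\<in>I. indicator (A i) (x i) :: ennreal) = indicator (PiE I A) x"
        using x by (auto simp: space_PiM indicator_def PiE_iff I)
      finally show "ennreal (L (x j)) * indicator (PiE I A) x = (\<Prod>i\<in>I. h i (x i))" by simp
    qed
    also have "\<dots> = (\<Prod>i\<in>I. integral\<^sup>N M (h i))"
      by (rule R.product_nn_integral_prod[OF I]) (auto intro: hm)
    also have "\<dots> = (\<Prod>i\<in>I. emeasure (if i = j then density M L else M) (A i))"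
    proof (intro prod.cong refl)
      have "emeasure (density M L) (A j) = (\<integral>\<^sup>+ t. ennreal (L t) * indicator (A j) t \<partial>M)"
        using AM[OF j] L(1) by (subst emeasure_density) auto
      then show "integral\<^sup>N M (h i) = emeasure (if i = j then density M L else M) (A i)" if "i \<in> I" for i
        using AM[OF that] by (simp add: h_def nn_integral_indicator)
    qed
    finally show "emeasure (density (PiM I (\<lambda>_. M)) (\<lambda>x. L (x j))) (PiE I A)
        = (\<Prod>i\<in>I. emeasure (if i = j then density M L else M) (A i))" .
  qed
qed

lemma (in prob_space) abs_integral_indicator_le_sqrt_second_moment:
  fixes G :: "'a \<Rightarrow> real"
  assumes S: "S \<in> events" and G: "integrable M G" and G2: "integrable M (\<lambda>x. (G x)\<^sup>2)"
  shows "\<bar>\<integral>x. G x * indicator S x \<partial>M\<bar> \<le> sqrt (\<integral>x. (G x)\<^sup>2 \<partial>M)"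
proof -
  have "\<bar>\<integral>x. G x * indicator S x \<partial>M\<bar> \<le> (\<integral>x. \<bar>G x * indicator S x\<bar> \<partial>M)"
    using integral_norm_bound[of M "\<lambda>x. G x * indicator S x"] by simp
  also have "\<dots> \<le> (\<integral>x. \<bar>G x\<bar> \<partial>M)"
    using S G by (intro integral_mono integrable_abs integrable_real_mult_indicator)
      (auto simp: indicator_def)
  also have "\<dots> \<le> sqrt (\<integral>x. (G x)\<^sup>2 \<partial>M)"
  proof (rule real_le_rsqrt)
    have "0 \<le> variance (\<lambda>x. \<bar>G x\<bar>)" by (intro Bochner_Integration.integral_nonneg) simp
    also have "\<dots> = (\<integral>x. (G x)\<^sup>2 \<partial>M) - (\<integral>x. \<bar>G x\<bar> \<partial>M)\<^sup>2"
      using G G2 by (subst variance_eq) auto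
    finally show "(\<integral>x. \<bar>G x\<bar> \<partial>M)\<^sup>2 \<le> (\<integral>x. (G x)\<^sup>2 \<partial>M)" by simp
  qed
  finally show ?thesis .
qed

lemma measure_density_component_swap:
  fixes L :: "'a \<Rightarrow> real"
  assumes M: "prob_space M" and L: "L \<in> borel_measurable M" "\<And>t. L t \<ge> 0"
    and j: "j \<in> I" and k: "k \<in> I" and S: "S \<in> sets (PiM I (\<lambda>_. M))"
    and sym: "\<And>x. x \<in> space (PiM I (\<lambda>_. M)) \<Longrightarrow> x \<circ> Transposition.transpose j k \<in> S \<longleftrightarrow> x \<in> S"
  shows "measure (density (PiM I (\<lambda>_. M)) (\<lambda>x. L (x j))) S
       = (\<integral>x. L (x k) * indicator S x \<partial>PiM I (\<lambda>_. M))"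
proof -
  let ?R = "PiM I (\<lambda>_. M)" and ?\<tau> = "Transposition.transpose j k"
  have Lm: "(\<lambda>x. L (x j) * indicator S x) \<in> borel_measurable ?R"
    using L(1) j S by measurable
  have "measure (density ?R (\<lambda>x. L (x j))) S = (\<integral>x. indicator S x \<partial>density ?R (\<lambda>x. L (x j)))"
    using S sets.sets_into_space[OF S] by (simp add: Int_absorb2)
  also have "\<dots> = (\<integral>x. L (x j) * indicator S x \<partial>?R)"
    using L j S by (subst integral_density) auto
  also have "\<dots> = (\<integral>x. L ((x \<circ> ?\<tau>) j) * indicator S (x \<circ> ?\<tau>) \<partial>?R)"
    using integral_PiM_permute[OF M permutes_swap_id[OF j k] Lm] by simp
  also have "\<dots> = (\<integral>x. L (x k) * indicator S x \<partial>?R)"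
    using sym by (intro Bochner_Integration.integral_cong) (auto simp: indicator_def)
  finally show ?thesis .
qed

text \<open>Second moment method: averaging the likelihood ratio over the coordinates in \<open>K\<close>, which
  a symmetric event cannot distinguish, divides its variance by \<open>card K\<close>.\<close>

lemma measure_density_component_diff_le:
  fixes L :: "'a \<Rightarrow> real"
  assumes M: "prob_space M" and L: "L \<in> borel_measurable M" "\<And>t. L t \<ge> 0"
    and L1: "integrable M L" "(\<integral>t. L t \<partial>M) = 1" and L2: "integrable M (\<lambda>t. (L t)\<^sup>2)"
    and I: "finite I" and K: "K \<subseteq> I" "j \<in> K" and S: "S \<in> sets (PiM I (\<lambda>_. M))"
    and sym: "\<And>k x. k \<in> K \<Longrightarrow> x \<in> space (PiM I (\<lambda>_. M)) \<Longrightarrow>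
                x \<circ> Transposition.transpose j k \<in> S \<longleftrightarrow> x \<in> S"
  shows "\<bar>measure (density (PiM I (\<lambda>_. M)) (\<lambda>x. L (x j))) S - measure (PiM I (\<lambda>_. M)) S\<bar>
           \<le> sqrt (((\<integral>t. (L t)\<^sup>2 \<partial>M) - 1) / card K)"
proof -
  let ?R = "PiM I (\<lambda>_. M)"
  interpret R: prob_space ?R using M by (intro prob_space_PiM)
  interpret M: prob_space M by (rule M)
  define g where "g = (\<lambda>t. L t - 1)"
  define G where "G = (\<lambda>x. (\<Sum>k\<in>K. g (x k)) / card K)"
  have KI: "k \<in> I" if "k \<in> K" for k using that K by auto
  have cK: "card K > 0" using K finite_subset[OF K(1) I] by (auto simp: card_gt_0_iff)
  have g: "integrable M g" "(\<integral>t. g t \<partial>M) = 0" using L1 by (auto simp: g_def M.prob_space)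
  have g2_eq: "(g t)\<^sup>2 = (L t)\<^sup>2 - 2 * L t + 1" for t by (simp add: g_def power2_eq_square algebra_simps)
  have g2: "integrable M (\<lambda>t. (g t)\<^sup>2)" "(\<integral>t. (g t)\<^sup>2 \<partial>M) = (\<integral>t. (L t)\<^sup>2 \<partial>M) - 1"
    unfolding g2_eq using L1 L2 by (auto simp: M.prob_space)
  have iS: "integrable ?R (indicator S :: _ \<Rightarrow> real)"
    using S by (intro integrable_real_indicator) (auto simp: R.emeasure_finite less_top[symmetric])
  have each: "(\<integral>x. g (x k) * indicator S x \<partial>?R)
      = measure (density ?R (\<lambda>x. L (x j))) S - measure ?R S" if k: "k \<in> K" for k
  proof -
    have "integrable ?R (\<lambda>x. L (x k) * indicator S x)"
      using S integral_PiM_component(1)[OF M KI[OF k] L1(1)] by (rule integrable_real_mult_indicator)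
    then show ?thesis
      using measure_density_component_swap[OF M L KI[OF K(2)] KI[OF k] S sym[OF k]] iS
        sets.sets_into_space[OF S]
      by (simp add: g_def left_diff_distrib Int_absorb2)
  qed
  have "(\<integral>x. G x * indicator S x \<partial>?R) = (\<Sum>k\<in>K. \<integral>x. g (x k) * indicator S x \<partial>?R) / card K"
    unfolding G_def using integral_PiM_component(1)[OF M KI g(1)] S
    by (simp add: sum_distrib_right integrable_real_mult_indicator)
  also have "\<dots> = measure (density ?R (\<lambda>x. L (x j))) S - measure ?R S"
    using cK by (simp add: each)
  finally have diff: "measure (density ?R (\<lambda>x. L (x j))) S - measure ?R S
      = (\<integral>x. G x * indicator S x \<partial>?R)" ..
  have G2: "integrable ?R (\<lambda>x. (G x)\<^sup>2)" "(\<integral>x. (G x)\<^sup>2 \<partial>?R) = ((\<integral>t. (L t)\<^sup>2 \<partial>M) - 1) / card K"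
    using integral_PiM_sum_components_square[OF M I K(1) g(1) g2(1) g(2)] cK
    unfolding g2(2) by (simp_all add: G_def power_divide power2_eq_square[of "real (card K)"])
  have G: "integrable ?R G"
    unfolding G_def using integral_PiM_component(1)[OF M KI g(1)] by simp
  show ?thesis
    unfolding diff G2(2)[symmetric]
    by (rule R.abs_integral_indicator_le_sqrt_second_moment[OF S G G2(1)])
qed

section \<open>The Gaussian likelihood ratio\<close>

definition unit_normal :: "real \<Rightarrow> real measure" where
  "unit_normal m = density lborel (normal_density m 1)"

definition normal_ratio :: "real \<Rightarrow> real \<Rightarrow> real \<Rightarrow> real \<Rightarrow> real" where
  "normal_ratio \<mu> \<sigma> m t = normal_density \<mu> \<sigma> t / normal_density m 1 t"

lemma prob_space_unit_normal: "prob_space (unit_normal m)"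
  unfolding unit_normal_def by (rule prob_space_normal_density) simp

lemma sets_unit_normal [simp, measurable_cong]: "sets (unit_normal m) = sets borel"
  by (simp add: unit_normal_def)

lemma space_unit_normal [simp]: "space (unit_normal m) = UNIV"
  by (simp add: unit_normal_def)

lemma normal_ratio_measurable [measurable]: "normal_ratio \<mu> \<sigma> m \<in> borel_measurable borel"
  unfolding normal_ratio_def by measurable

lemma normal_ratio_nonneg: "normal_ratio \<mu> \<sigma> m t \<ge> 0"
  by (simp add: normal_ratio_def)

lemma normal_density_mult_normal_ratio: "normal_density m 1 t * normal_ratio \<mu> \<sigma> m t = normal_density \<mu> \<sigma> t"
  using normal_density_pos[of 1 m t] by (simp add: normal_ratio_def)

lemma density_unit_normal_ratio:
  "density (unit_normal m) (normal_ratio \<mu> \<sigma> m) = density lborel (normal_density \<mu> \<sigma>)"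
  unfolding unit_normal_def
  by (subst density_density_eq)
     (auto simp flip: ennreal_mult'' simp: normal_ratio_nonneg normal_density_mult_normal_ratio)

lemma integral_normal_ratio:
  assumes "\<sigma> > 0"
  shows "integrable (unit_normal m) (normal_ratio \<mu> \<sigma> m)"
    and "(\<integral>t. normal_ratio \<mu> \<sigma> m t \<partial>unit_normal m) = 1"
  using assms by (simp_all add: unit_normal_def integrable_density integral_density
      normal_density_mult_normal_ratio)

text \<open>Completing the square in the exponent; \<open>a > 1/2\<close> makes the result a normal density again.\<close>

lemma normal_density_square_div:
  fixes a \<mu> m t :: real
  assumes a: "a > 1/2"
  defines "b \<equiv> a - 1/2"
  defines "c \<equiv> (2*a*\<mu> - m)/(2*b)"
  shows "normal_density \<mu> (1 / sqrt a) t ^ 2 / normal_density m 1 t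
        = a / sqrt (2*b) * exp (b*c^2 - a*\<mu>^2 + m^2/2) * normal_density c (1/sqrt (2*b)) t"
proof -
  have b: "b > 0" using a b_def by simp
  have square: "-a*(t-\<mu>)^2 + (t-m)^2/2 = -b*(t-c)^2 + (b*c^2 - a*\<mu>^2 + m^2/2)"
  proof -
    have "-b*(t-c)^2 + b*c^2 = -b*t^2 + (2*b*c)*t" by (simp add: power2_eq_square algebra_simps)
    also have "2*b*c = 2*a*\<mu> - m" using b unfolding c_def by simp
    finally show ?thesis unfolding b_def by (simp add: power2_eq_square algebra_simps) argo
  qed
  have n1: "normal_density \<mu> (1 / sqrt a) t = sqrt a / sqrt (2*pi) * exp (-a*(t-\<mu>)^2/2)"
    using a by (simp add: normal_density_def real_sqrt_divide real_sqrt_mult power_divide field_simps)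
  have n2: "normal_density m 1 t = 1 / sqrt (2*pi) * exp (- ((t-m)^2) / 2)"
    by (simp add: normal_density_def)
  have n3: "normal_density c (1/sqrt (2*b)) t = sqrt b / sqrt pi * exp (-b*(t-c)^2)"
    using b by (simp add: normal_density_def real_sqrt_divide real_sqrt_mult power_divide field_simps)
  have "normal_density \<mu> (1 / sqrt a) t ^ 2 / normal_density m 1 t
      = a / sqrt (2*pi) * exp (-a*(t-\<mu>)^2 + (t-m)^2/2)"
    using a unfolding n1 n2
    by (simp add: power_mult_distrib power_divide exp_diff[symmetric] exp_add[symmetric] field_simps
          flip: exp_of_nat_mult)
  also have "\<dots> = a / sqrt (2*pi) * exp (-b*(t-c)^2) * exp (b*c^2 - a*\<mu>^2 + m^2/2)"
    unfolding square exp_add by simp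
  also have "\<dots> = a / sqrt (2*b) * exp (b*c^2 - a*\<mu>^2 + m^2/2) * normal_density c (1/sqrt (2*b)) t"
    unfolding n3 using b by (simp add: real_sqrt_mult field_simps)
  finally show ?thesis .
qed

lemma integral_normal_ratio_square:
  fixes a \<mu> m :: real
  assumes a: "a > 1/2"
  defines "b \<equiv> a - 1/2"
  defines "c \<equiv> (2*a*\<mu> - m)/(2*b)"
  shows "integrable (unit_normal m) (\<lambda>t. (normal_ratio \<mu> (1/sqrt a) m t)\<^sup>2)"
    and "(\<integral>t. (normal_ratio \<mu> (1/sqrt a) m t)\<^sup>2 \<partial>unit_normal m)
           = a / sqrt (2*b) * exp (b*c^2 - a*\<mu>^2 + m^2/2)"
proof -
  have b: "b > 0" using a b_def by simp
  have eq: "normal_density m 1 t * (normal_ratio \<mu> (1/sqrt a) m t)\<^sup>2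
      = a / sqrt (2*b) * exp (b*c^2 - a*\<mu>^2 + m^2/2) * normal_density c (1/sqrt (2*b)) t" for t
    using normal_density_pos[of 1 m t] normal_density_square_div[OF a, of \<mu> t m]
    by (simp add: normal_ratio_def b_def c_def power2_eq_square)
  have "integrable lborel (normal_density c (1/sqrt (2*b)))"
    using b by (intro integrable_normal_density) simp
  then show "integrable (unit_normal m) (\<lambda>t. (normal_ratio \<mu> (1/sqrt a) m t)\<^sup>2)"
    unfolding unit_normal_def by (subst integrable_density) (auto simp: eq)
  have "(\<integral>t. (normal_ratio \<mu> (1/sqrt a) m t)\<^sup>2 \<partial>unit_normal m)
      = a / sqrt (2*b) * exp (b*c^2 - a*\<mu>^2 + m^2/2) * (\<integral>t. normal_density c (1/sqrt (2*b)) t \<partial>lborel)"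
    unfolding unit_normal_def by (subst integral_density) (auto simp: eq)
  also have "(\<integral>t. normal_density c (1/sqrt (2*b)) t \<partial>lborel) = 1"
    using b by (intro integral_normal_density) simp
  finally show "(\<integral>t. (normal_ratio \<mu> (1/sqrt a) m t)\<^sup>2 \<partial>unit_normal m)
           = a / sqrt (2*b) * exp (b*c^2 - a*\<mu>^2 + m^2/2)" by simp
qed

definition second_moment_bound :: "real \<Rightarrow> real" where
  "second_moment_bound \<alpha> = \<alpha>^2 / sqrt (2*(\<alpha>^2 - 1/2))
     * exp ((2*\<alpha>^2*(1+2*\<alpha>)+\<alpha>)^2 / (4*(\<alpha>^2 - 1/2)) + \<alpha>^2/2)"

lemma normal_ratio_second_moment_le:
  fixes \<alpha> \<mu> m :: real
  assumes \<alpha>: "\<alpha> > 1/sqrt 2" and \<mu>: "\<bar>\<mu>\<bar> \<le> 1 + 2*\<alpha>" and m: "\<bar>m\<bar> \<le> \<alpha>"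
  shows "integrable (unit_normal m) (\<lambda>t. (normal_ratio \<mu> (1/\<alpha>) m t)\<^sup>2)"
    and "(\<integral>t. (normal_ratio \<mu> (1/\<alpha>) m t)\<^sup>2 \<partial>unit_normal m) \<le> second_moment_bound \<alpha>"
proof -
  define a where "a = \<alpha>^2"
  define b where "b = a - 1/2"
  have \<alpha>0: "\<alpha> > 0" using \<alpha> order.strict_trans[of 0 "1/sqrt 2" \<alpha>] by simp
  have a: "a > 1/2"
    using power_strict_mono[OF \<alpha>, of 2] by (simp add: a_def power_divide)
  have b: "b > 0" using a b_def by simp
  have sa: "1 / sqrt a = 1/\<alpha>" using \<alpha>0 by (simp add: a_def)
  have I: "integrable (unit_normal m) (\<lambda>t. (normal_ratio \<mu> (1/\<alpha>) m t)\<^sup>2)"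
    "(\<integral>t. (normal_ratio \<mu> (1/\<alpha>) m t)\<^sup>2 \<partial>unit_normal m)
       = a / sqrt (2*b) * exp (b * ((2*a*\<mu> - m)/(2*b))^2 - a*\<mu>^2 + m^2/2)"
    using integral_normal_ratio_square[OF a, where \<mu>=\<mu> and m=m] unfolding sa b_def by simp_all
  show "integrable (unit_normal m) (\<lambda>t. (normal_ratio \<mu> (1/\<alpha>) m t)\<^sup>2)" by (rule I(1))
  have "2*a*\<bar>\<mu>\<bar> \<le> 2*a*(1+2*\<alpha>)" using \<mu> a by (intro mult_left_mono) auto
  moreover have "\<bar>2*a*\<mu>\<bar> = 2*a*\<bar>\<mu>\<bar>" using a by (simp add: abs_mult)
  ultimately have "\<bar>2*a*\<mu> - m\<bar> \<le> 2*a*(1+2*\<alpha>) + \<alpha>"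
    using abs_triangle_ineq4[of "2*a*\<mu>" m] m by linarith
  then have sq: "(2*a*\<mu> - m)^2 \<le> (2*a*(1+2*\<alpha>) + \<alpha>)^2"
    using power_mono[of "\<bar>2*a*\<mu> - m\<bar>" _ 2] by simp
  have "b * ((2*a*\<mu> - m)/(2*b))^2 = (2*a*\<mu> - m)^2 / (4*b)"
    using b by (simp add: power_divide power2_eq_square)
  also have "\<dots> \<le> (2*a*(1+2*\<alpha>) + \<alpha>)^2 / (4*b)"
    using sq b by (simp add: divide_right_mono)
  finally have "b * ((2*a*\<mu> - m)/(2*b))^2 \<le> (2*a*(1+2*\<alpha>) + \<alpha>)^2 / (4*b)" .
  moreover have "m^2 \<le> \<alpha>^2" using power_mono[OF m, of 2] by simp
  moreover have "a*\<mu>^2 \<ge> 0" using a by simp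
  ultimately have "b * ((2*a*\<mu> - m)/(2*b))^2 - a*\<mu>^2 + m^2/2
      \<le> (2*a*(1+2*\<alpha>) + \<alpha>)^2 / (4*b) + \<alpha>^2/2"
    by linarith
  then show "(\<integral>t. (normal_ratio \<mu> (1/\<alpha>) m t)\<^sup>2 \<partial>unit_normal m) \<le> second_moment_bound \<alpha>"
    unfolding I(2) second_moment_bound_def a_def[symmetric] b_def[symmetric]
    using a b by (intro mult_left_mono) auto
qed

definition gauss_planted :: "real \<Rightarrow> real \<Rightarrow> real \<Rightarrow> nat \<Rightarrow> (nat \<Rightarrow> real) measure" where
  "gauss_planted \<mu> \<sigma> m d =
     PiM {0..d} (\<lambda>i. if i = 0 then density lborel (normal_density \<mu> \<sigma>) else unit_normal m)"

lemma cond_law_eq_gauss_planted: "cond_law \<alpha> d y = gauss_planted y (1/\<alpha>) (y * eta \<alpha> d) d"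
  unfolding cond_law_def gauss_planted_def unit_normal_def ..

lemma space_gauss_planted: "space (gauss_planted \<mu> \<sigma> m d) = PiE {0..d} (\<lambda>_. UNIV)"
  unfolding gauss_planted_def space_PiM by (intro PiE_cong) simp

lemma sets_gauss_planted: "sets (gauss_planted \<mu> \<sigma> m d) = sets (PiM {0..d} (\<lambda>_. unit_normal m'))"
  unfolding gauss_planted_def by (rule sets_PiM_cong) auto

lemma prob_space_gauss_planted: "\<sigma> > 0 \<Longrightarrow> prob_space (gauss_planted \<mu> \<sigma> m d)"
  unfolding gauss_planted_def
  by (intro prob_space_PiM) (simp add: prob_space_normal_density prob_space_unit_normal)

lemma gauss_planted_eq_density:
  assumes "\<sigma> > 0"
  shows "gauss_planted \<mu> \<sigma> m d
       = density (PiM {0..d} (\<lambda>_. unit_normal m)) (\<lambda>x. normal_ratio \<mu> \<sigma> m (x 0))"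
proof -
  have "prob_space (density (unit_normal m) (normal_ratio \<mu> \<sigma> m))"
    using assms by (simp add: density_unit_normal_ratio prob_space_normal_density)
  moreover have "normal_ratio \<mu> \<sigma> m \<in> borel_measurable (unit_normal m)" by measurable
  ultimately show ?thesis
    using PiM_planted_eq_density[OF prob_space_unit_normal, of m "normal_ratio \<mu> \<sigma> m" "{0..d}" 0]
    unfolding gauss_planted_def density_unit_normal_ratio by (simp add: normal_ratio_nonneg)
qed

lemma distr_normal_shift:
  assumes "\<sigma> > 0" and "sets N = sets borel"
  shows "distr (density lborel (normal_density \<mu> \<sigma>)) N ((+) c) = density lborel (normal_density (c + \<mu>) \<sigma>)"
proof -
  have "density lborel (normal_density (c + \<mu>) \<sigma>)
      = distr (density lborel (\<lambda>x. normal_density (c + \<mu>) \<sigma> (c + x))) borel ((+) c)"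
    by (subst lborel_distr_plus[symmetric, of c]) (rule density_distr; simp)
  also have "(\<lambda>x. normal_density (c + \<mu>) \<sigma> (c + x)) = normal_density \<mu> \<sigma>"
    by (simp add: normal_density_def fun_eq_iff)
  finally show ?thesis using assms(2) by (simp cong: distr_cong)
qed

lemma distr_gauss_planted_shift:
  assumes \<sigma>: "\<sigma> > 0"
  shows "distr (gauss_planted \<mu> \<sigma> m d) (PiM {0..d} (\<lambda>_. unit_normal m')) (compose {0..d} ((+) c))
       = gauss_planted (c + \<mu>) \<sigma> (c + m) d"
  unfolding gauss_planted_def
  using \<sigma> distr_normal_shift[OF \<sigma>] distr_normal_shift[OF zero_less_one]
  by (subst distr_PiM_finite_prob_space')
     (auto simp: prob_space_normal_density prob_space_unit_normal unit_normal_def intro!: PiM_cong)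

lemma gauss_planted_measure_diff_le:
  fixes \<alpha> \<mu> m :: real and N d :: nat
  assumes \<alpha>: "\<alpha> > 1/sqrt 2" and \<mu>: "\<bar>\<mu>\<bar> \<le> 1 + 2*\<alpha>" and m: "\<bar>m\<bar> \<le> \<alpha>"
    and N: "1 \<le> N" "N \<le> d + 1" and S: "S \<in> sets (PiM {0..d} (\<lambda>_. unit_normal m))"
    and sym: "\<And>k x. k < N \<Longrightarrow> x \<in> space (PiM {0..d} (\<lambda>_. unit_normal m)) \<Longrightarrow>
                x \<circ> Transposition.transpose 0 k \<in> S \<longleftrightarrow> x \<in> S"
  shows "\<bar>measure (gauss_planted \<mu> (1/\<alpha>) m d) S - measure (PiM {0..d} (\<lambda>_. unit_normal m)) S\<bar>
           \<le> sqrt (second_moment_bound \<alpha> / N)"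
proof -
  have \<alpha>0: "\<alpha> > 0" using \<alpha> order.strict_trans[of 0 "1/sqrt 2" \<alpha>] by simp
  note L2 = normal_ratio_second_moment_le[OF \<alpha> \<mu> m]
  have "\<bar>measure (gauss_planted \<mu> (1/\<alpha>) m d) S - measure (PiM {0..d} (\<lambda>_. unit_normal m)) S\<bar>
      \<le> sqrt (((\<integral>t. (normal_ratio \<mu> (1/\<alpha>) m t)\<^sup>2 \<partial>unit_normal m) - 1) / card {..<N})"
    unfolding gauss_planted_eq_density[OF divide_pos_pos[OF zero_less_one \<alpha>0]]
    using \<alpha>0 N sym
    by (intro measure_density_component_diff_le[OF prob_space_unit_normal _ _ _ _ L2(1) _ _ _ S])
       (auto simp: normal_ratio_nonneg integral_normal_ratio)
  also have "\<dots> \<le> sqrt (second_moment_bound \<alpha> / N)"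
    using L2(2) N by (auto intro!: divide_right_mono)
  finally show ?thesis .
qed

section \<open>Rotation-translation perturbations\<close>

definition RT_perms :: "nat \<Rightarrow> nat \<Rightarrow> (nat \<Rightarrow> nat) set" where
  "RT_perms d N = {\<pi>. \<pi> permutes {0..d} \<and> (\<forall>i. N \<le> i \<longrightarrow> \<pi> i = i)}"

lemma finite_RT_perms: "finite (RT_perms d N)"
  by (rule finite_subset[OF _ finite_permutations[of "{0..d}"]]) (auto simp: RT_perms_def)

lemma id_in_RT_perms: "id \<in> RT_perms d N"
  by (simp add: RT_perms_def permutes_id)

lemma comp_in_RT_perms: "\<pi> \<in> RT_perms d N \<Longrightarrow> \<rho> \<in> RT_perms d N \<Longrightarrow> \<pi> \<circ> \<rho> \<in> RT_perms d N"
  by (auto simp: RT_perms_def permutes_compose)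

lemma inv_in_RT_perms: "\<pi> \<in> RT_perms d N \<Longrightarrow> inv \<pi> \<in> RT_perms d N"
  by (auto simp: RT_perms_def permutes_inv permutes_inv_eq)

lemma transpose_in_RT_perms: "k < N \<Longrightarrow> N \<le> d + 1 \<Longrightarrow> Transposition.transpose 0 k \<in> RT_perms d N"
  by (auto simp: RT_perms_def Transposition.transpose_def intro!: permutes_swap_id)

lemma S_RT_eq_image: "S_RT d N x = (\<lambda>\<pi>. x \<circ> \<pi>) ` RT_perms d N"
  by (auto simp: S_RT_def RT_perms_def)

definition RT_core :: "nat \<Rightarrow> nat \<Rightarrow> (nat \<Rightarrow> real) set \<Rightarrow> (nat \<Rightarrow> real) set" where
  "RT_core d N A = {x \<in> PiE {0..d} (\<lambda>_. UNIV). \<forall>\<pi>\<in>RT_perms d N. x \<circ> \<pi> \<in> A}"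

lemma RT_core_subset: "RT_core d N A \<subseteq> A"
  using id_in_RT_perms by (force simp: RT_core_def)

lemma comp_RT_perms_in_PiE:
  "x \<in> PiE {0..d} (\<lambda>_. UNIV) \<Longrightarrow> \<pi> \<in> RT_perms d N \<Longrightarrow> x \<circ> \<pi> \<in> PiE {0..d} (\<lambda>_. UNIV)"
  by (auto simp: RT_perms_def PiE_iff extensional_def permutes_not_in)

lemma sets_RT_core:
  assumes A: "A \<in> sets (PiM {0..d} (\<lambda>_. M))" and M: "space M = UNIV"
  shows "RT_core d N A \<in> sets (PiM {0..d} (\<lambda>_. M))"
proof -
  let ?R = "PiM {0..d} (\<lambda>_. M)"
  have "RT_core d N A = space ?R \<inter> (\<Inter>\<pi>\<in>RT_perms d N. (\<lambda>x. x \<circ> \<pi>) -` A \<inter> space ?R)"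
    using M by (auto simp: RT_core_def space_PiM)
  also have "\<dots> \<in> sets ?R"
  proof -
    have "(\<lambda>x. x \<circ> \<pi>) -` A \<inter> space ?R \<in> sets ?R" if "\<pi> \<in> RT_perms d N" for \<pi>
      using that A by (intro measurable_sets[OF measurable_PiM_permute]) (auto simp: RT_perms_def)
    then have "(\<Inter>\<pi>\<in>RT_perms d N. (\<lambda>x. x \<circ> \<pi>) -` A \<inter> space ?R) \<in> sets ?R"
      using id_in_RT_perms[of d N] by (intro sets.finite_INT finite_RT_perms) auto
    then show ?thesis by (rule sets.Int[OF sets.top])
  qed
  finally show ?thesis .
qed

lemma transpose_in_RT_core_iff:
  assumes k: "k < N" "N \<le> d + 1" and x: "x \<in> PiE {0..d} (\<lambda>_. UNIV)"
  shows "x \<circ> Transposition.transpose 0 k \<in> RT_core d N A \<longleftrightarrow> x \<in> RT_core d N A"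
proof -
  let ?\<tau> = "Transposition.transpose 0 k"
  have \<tau>: "?\<tau> \<in> RT_perms d N" by (rule transpose_in_RT_perms[OF k])
  have \<tau>\<tau>: "?\<tau> \<circ> ?\<tau> = id" by (simp add: fun_eq_iff)
  have fwd: "y \<circ> ?\<tau> \<in> RT_core d N A" if "y \<in> RT_core d N A" for y
  proof -
    have "y \<circ> (?\<tau> \<circ> \<pi>) \<in> A" if "\<pi> \<in> RT_perms d N" for \<pi>
      using \<open>y \<in> RT_core d N A\<close> comp_in_RT_perms[OF \<tau> that] by (simp add: RT_core_def)
    then have "y \<circ> ?\<tau> \<circ> \<pi> \<in> A" if "\<pi> \<in> RT_perms d N" for \<pi>
      using that by (simp add: o_assoc)
    then show ?thesis using that comp_RT_perms_in_PiE[OF _ \<tau>] by (auto simp: RT_core_def)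
  qed
  have "x \<circ> ?\<tau> \<circ> ?\<tau> = x" by (simp add: o_assoc[symmetric] \<tau>\<tau>)
  then show ?thesis using fwd[of x] fwd[of "x \<circ> ?\<tau>"] by auto
qed

lemma linf_error_if_shift_notin_RT_core:
  fixes f :: "(nat \<Rightarrow> real) \<Rightarrow> real" and y c \<epsilon> :: real
  assumes f: "\<forall>x. f x \<in> {-1, 1}" and y: "y \<in> {-1, 1}" and c: "\<bar>c\<bar> \<le> \<epsilon>"
    and x: "x \<in> PiE {0..d} (\<lambda>_. UNIV)"
    and A: "{x \<in> PiE {0..d} (\<lambda>_. UNIV). \<exists>x'\<in>S_RT d N x. f x' \<noteq> -y} \<subseteq> A"
    and notin: "compose {0..d} ((+) c) x \<notin> RT_core d N A"
  shows "\<exists>x'\<in>S_linf d \<epsilon> x. f x' \<noteq> y"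
proof -
  define z where "z = compose {0..d} ((+) c) x"
  have z: "z \<in> PiE {0..d} (\<lambda>_. UNIV)" by (simp add: z_def compose_def)
  then obtain \<pi> where \<pi>: "\<pi> \<in> RT_perms d N" "z \<circ> \<pi> \<notin> A"
    using notin by (auto simp: RT_core_def z_def)
  have "z = (z \<circ> \<pi>) \<circ> inv \<pi>"
    using \<pi>(1) by (auto simp: RT_perms_def o_assoc[symmetric] permutes_inv_o)
  then have "z \<in> S_RT d N (z \<circ> \<pi>)"
    using inv_in_RT_perms[OF \<pi>(1)] unfolding S_RT_eq_image by blast
  then have "f z = -y"
    using A \<pi> comp_RT_perms_in_PiE[OF z \<pi>(1)] f by blast
  moreover have "z \<in> S_linf d \<epsilon> x"
    unfolding S_linf_def z_def using c
    by (intro CollectI exI[of _ "\<lambda>_. c"]) (auto simp: compose_def fun_eq_iff)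
  ultimately show ?thesis using y by force
qed

section \<open>The two adversarial risks\<close>

lemma outer_prob_add_ge:
  fixes M M' :: "'a measure"
  assumes E: "E \<subseteq> space M" and E': "E' \<subseteq> space M'"
    and ge: "\<And>A A'. A \<in> sets M \<Longrightarrow> A' \<in> sets M' \<Longrightarrow> E \<subseteq> A \<Longrightarrow> E' \<subseteq> A' \<Longrightarrow>
               c \<le> measure M A + measure M' A'"
  shows "c \<le> outer_prob M E + outer_prob M' E'"
proof -
  let ?X = "{measure M A | A. A \<in> sets M \<and> E \<subseteq> A}"
  let ?Y = "{measure M' A | A. A \<in> sets M' \<and> E' \<subseteq> A}"
  have X: "?X \<noteq> {}" using E by blast
  have Y: "?Y \<noteq> {}" using E' by blast
  have "c - Inf ?Y \<le> Inf ?X"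
  proof (rule cInf_greatest[OF X])
    fix u assume "u \<in> ?X"
    then obtain A where A: "A \<in> sets M" "E \<subseteq> A" "u = measure M A" by blast
    have "c - u \<le> Inf ?Y"
      using ge[OF A(1) _ A(2)] A(3) by (intro cInf_greatest[OF Y]) force
    then show "c - Inf ?Y \<le> u" by simp
  qed
  then show ?thesis unfolding outer_prob_def by simp
qed

lemma eta_bounds: "\<alpha> > 0 \<Longrightarrow> 0 \<le> eta \<alpha> d \<and> eta \<alpha> d \<le> \<alpha>"
  by (cases "d = 0") (auto simp: eta_def divide_le_eq intro: order.trans[OF _ mult_left_mono])

lemma linf_risk_add_RT_risk_ge:
  fixes \<alpha> y :: real and d N :: nat and f :: "(nat \<Rightarrow> real) \<Rightarrow> real"
  assumes \<alpha>: "\<alpha> > 1/sqrt 2" and N: "1 \<le> N" "N \<le> d + 1"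
    and y: "y \<in> {-1, 1}" and f: "\<forall>x. f x \<in> {-1, 1}"
  shows "1 - 2 * sqrt (second_moment_bound \<alpha> / N)
    \<le> outer_prob (cond_law \<alpha> d y)
         {x \<in> space (cond_law \<alpha> d y). \<exists>x'\<in>S_linf d (2 * eta \<alpha> d) x. f x' \<noteq> y}
     + outer_prob (cond_law \<alpha> d (-y))
         {x \<in> space (cond_law \<alpha> d (-y)). \<exists>x'\<in>S_RT d N x. f x' \<noteq> -y}"
proof -
  have \<alpha>0: "\<alpha> > 0" using \<alpha> order.strict_trans[of 0 "1/sqrt 2" \<alpha>] by simp
  define \<eta> where "\<eta> = eta \<alpha> d"
  define \<delta> where "\<delta> = sqrt (second_moment_bound \<alpha> / N)"
  define c where "c = -2 * y * \<eta>"
  define T where "T = compose {0..d} ((+) c)"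
  define R where "R = PiM {0..d} (\<lambda>_. unit_normal (-y * \<eta>))"
  define P where "P = cond_law \<alpha> d y"
  define P' where "P' = cond_law \<alpha> d (-y)"
  have \<eta>: "0 \<le> \<eta>" "\<eta> \<le> \<alpha>" using eta_bounds[OF \<alpha>0] by (auto simp: \<eta>_def)
  have y1: "\<bar>y\<bar> = 1" using y by auto
  have \<sigma>: "1/\<alpha> > 0" using \<alpha>0 by simp
  have P: "P = gauss_planted y (1/\<alpha>) (y * \<eta>) d" and P': "P' = gauss_planted (-y) (1/\<alpha>) (-y * \<eta>) d"
    by (simp_all add: P_def P'_def \<eta>_def cond_law_eq_gauss_planted)
  have spaces: "space P = PiE {0..d} (\<lambda>_. UNIV)" "space P' = PiE {0..d} (\<lambda>_. UNIV)"
    "space R = PiE {0..d} (\<lambda>_. UNIV)"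
    by (simp_all add: P P' space_gauss_planted R_def space_PiM)
  interpret P: prob_space P unfolding P by (rule prob_space_gauss_planted[OF \<sigma>])
  interpret P': prob_space P' unfolding P' by (rule prob_space_gauss_planted[OF \<sigma>])
  have T: "T \<in> measurable P R"
    unfolding P measurable_cong_sets[OF sets_gauss_planted[where m'="y * \<eta>"] refl]
      T_def R_def compose_def
    by (rule measurable_restrict) simp
  have TP: "distr P R T = gauss_planted (c + y) (1/\<alpha>) (-y * \<eta>) d"
    unfolding P T_def R_def distr_gauss_planted_shift[OF \<sigma>] by (simp add: c_def algebra_simps)
  have c: "\<bar>c\<bar> = 2 * \<eta>" using y1 \<eta> by (simp add: c_def abs_mult)
  show ?thesis
    unfolding P_def[symmetric] P'_def[symmetric] \<eta>_def[symmetric] \<delta>_def[symmetric]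
  proof (rule outer_prob_add_ge)
    fix A1 A2
    assume A1: "A1 \<in> sets P" "{x \<in> space P. \<exists>x'\<in>S_linf d (2*\<eta>) x. f x' \<noteq> y} \<subseteq> A1"
      and A2: "A2 \<in> sets P'" "{x \<in> space P'. \<exists>x'\<in>S_RT d N x. f x' \<noteq> -y} \<subseteq> A2"
    define A where "A = RT_core d N A2"
    have A: "A \<in> sets R"
      using A2(1) unfolding A_def R_def P' sets_gauss_planted[where m'="-y * \<eta>"]
      by (rule sets_RT_core) simp
    have linf_errors: "space P - (T -` A \<inter> space P) \<subseteq> A1"
      using A1(2) A2(2) linf_error_if_shift_notin_RT_core[OF f y, of c "2 * \<eta>" _ d N A2] c
      by (auto simp: spaces T_def A_def)
    have "1 - measure (distr P R T) A \<le> measure P A1"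
      using P.finite_measure_mono[OF linf_errors A1(1)] P.prob_compl[OF measurable_sets[OF T A]]
      unfolding measure_distr[OF T A] by linarith
    moreover have "measure P' A \<le> measure P' A2"
      using A2(1) RT_core_subset by (intro P'.finite_measure_mono) (auto simp: A_def)
    moreover have "\<bar>measure Q A - measure R A\<bar> \<le> \<delta>" if "Q = gauss_planted \<mu> (1/\<alpha>) (-y * \<eta>) d"
      and "\<bar>\<mu>\<bar> \<le> 1 + 2*\<alpha>" for Q \<mu>
      unfolding that(1) R_def \<delta>_def using \<alpha> that(2) y1 \<eta> N A
      by (intro gauss_planted_measure_diff_le)
         (auto simp: abs_mult A_def R_def space_PiM transpose_in_RT_core_iff)
    then have "\<bar>measure (distr P R T) A - measure R A\<bar> \<le> \<delta>" "\<bar>measure P' A - measure R A\<bar> \<le> \<delta>"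
      using y1 c \<eta> \<alpha>0 abs_triangle_ineq[of c y] by (auto simp: TP P')
    ultimately show "1 - 2 * \<delta> \<le> measure P A1 + measure P' A2" by linarith
  qed (auto simp: spaces)
qed

theorem theorem2:
  fixes \<alpha> :: real
  assumes "\<alpha> > 1 / sqrt 2"
  shows "\<exists>C::real. \<forall>(N::nat) (d::nat) (f :: (nat \<Rightarrow> real) \<Rightarrow> real).
           N \<ge> 2 \<longrightarrow> d \<ge> N - 1 \<longrightarrow> (\<forall>x. f x \<in> {-1, 1}) \<longrightarrow>
           avg_adv_risk \<alpha> d f (S_linf d (2 * eta \<alpha> d)) (S_RT d N)
             \<ge> 1/2 - C / sqrt (real N)"
proof (intro exI allI impI)
  fix N d :: nat and f :: "(nat \<Rightarrow> real) \<Rightarrow> real"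
  assume "N \<ge> 2" "d \<ge> N - 1" and f: "\<forall>x. f x \<in> {-1, 1}"
  then have N: "1 \<le> N" "N \<le> d + 1" by auto
  from linf_risk_add_RT_risk_ge[OF assms N _ f, where y=1]
    linf_risk_add_RT_risk_ge[OF assms N _ f, where y="-1"]
  show "avg_adv_risk \<alpha> d f (S_linf d (2 * eta \<alpha> d)) (S_RT d N)
      \<ge> 1/2 - sqrt (second_moment_bound \<alpha>) / sqrt (real N)"
    by (simp add: avg_adv_risk_def adv_risk_def real_sqrt_divide)
qed

end
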